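(* Let $\Theta\subseteq\mathbb{R}^p$ be convex, and let $f:\mathbb{R}^p\to\mathbb{R}$ be continuous and bounded below, such that for all $\theta,\theta'\in\Theta$ the directional derivative $\nabla f(\theta,\theta'-\theta)$ exists. Let $\theta_0\in\Theta$ and consider the sequence generated by: for $n\ge1$, choose a surrogate $g_n$ of $f$ and set $\theta_n\in\operatorname{arg\,min}_{\theta\in\Theta}g_n(\theta)$. Assume that for every $n\ge 1$, $g_n\in\mathcal{S}_L(f,\theta_{n-1})$ and that either all $g_n$ are majorant functions or all $g_n$ are $\rho$-strongly convex (for some $\rho>0$). Then $(f(\theta_n))_{n\ge0}$ is monotonically non-increasing and $(\theta_n)_{n\ge0}$ satisfies the asymptotic stationary point condition $$\liminf_{n\to+\infty}\ \inf_{\theta\in\Theta\setminus\{\theta_n\}}\frac{\nabla f(\theta_n,\theta-\theta_n)}{\|\theta-\theta_n\|_2}\ \ge 0.$$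
   Context: The directional derivative of $f$ at $\theta$ in direction $\theta'-\theta$ is $\nabla f(\theta,\theta'-\theta)\triangleq\lim_{t\to0^+}\frac{f(\theta+t(\theta'-\theta))-f(\theta)}{t}$. First-order surrogates: $g:\mathbb{R}^p\to\mathbb{R}$ belongs to $\mathcal{S}_L(f,\kappa)$ if (a) $g(\theta')\ge f(\theta')$ for all $\theta'\in\operatorname{arg\,min}_{\theta\in\Theta}g(\theta)$, and (b) $h\triangleq g-f$ is differentiable with $L$-Lipschitz gradient, $h(\kappa)=0$ and $\nabla h(\kappa)=0$. $g$ is called a majorant function if $g\ge f$ everywhere. The minimizers $\theta_n$ are assumed to exist. *)

theory Defs
  imports "HOL-Analysis.Analysis"
begin

definition dir_deriv_exists :: "('a::real_normed_vector \<Rightarrow> real) \<Rightarrow> 'a \<Rightarrow> 'a \<Rightarrow> bool" where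
  "dir_deriv_exists f x d \<longleftrightarrow> (\<exists>l. ((\<lambda>t. (f (x + t *\<^sub>R d) - f x) / t) \<longlongrightarrow> l) (at_right 0))"

definition dir_deriv :: "('a::real_normed_vector \<Rightarrow> real) \<Rightarrow> 'a \<Rightarrow> 'a \<Rightarrow> real" where
  "dir_deriv f x d = Lim (at_right 0) (\<lambda>t. (f (x + t *\<^sub>R d) - f x) / t)"

definition argmin_on :: "'a set \<Rightarrow> ('a \<Rightarrow> real) \<Rightarrow> 'a set" where
  "argmin_on Theta g = {x \<in> Theta. \<forall>y \<in> Theta. g x \<le> g y}"

definition first_order_surrogate ::
  "'a::euclidean_space set \<Rightarrow> real \<Rightarrow> ('a \<Rightarrow> real) \<Rightarrow> 'a \<Rightarrow> ('a \<Rightarrow> real) \<Rightarrow> bool" where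
  "first_order_surrogate Theta L f kappa g \<longleftrightarrow>
     (\<forall>x \<in> argmin_on Theta g. g x \<ge> f x) \<and>
     (\<exists>G. (\<forall>x. ((\<lambda>y. g y - f y) has_derivative (\<lambda>v. G x \<bullet> v)) (at x)) \<and>
          (\<forall>x y. norm (G x - G y) \<le> L * norm (x - y)) \<and>
          g kappa - f kappa = 0 \<and> G kappa = 0)"

definition majorant :: "('a \<Rightarrow> real) \<Rightarrow> ('a \<Rightarrow> real) \<Rightarrow> bool" where
  "majorant f g \<longleftrightarrow> (\<forall>x. g x \<ge> f x)"

definition strongly_convex :: "real \<Rightarrow> ('a::real_normed_vector \<Rightarrow> real) \<Rightarrow> bool" where
  "strongly_convex rho g \<longleftrightarrow> convex_on UNIV (\<lambda>x. g x - rho / 2 * (norm x)\<^sup>2)"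

end

theory Submission
  imports Defs
begin

text \<open>
Write \<open>h\<^sub>n = g\<^sub>n - f\<close>. Since \<open>\<theta>\<^sub>n\<close> minimises \<open>g\<^sub>n\<close> over the convex set \<open>\<Theta>\<close>, every feasible
directional derivative of \<open>g\<^sub>n\<close> at \<open>\<theta>\<^sub>n\<close> is nonnegative, so the one of \<open>f\<close> is at least
\<open>-\<parallel>\<nabla>h\<^sub>n(\<theta>\<^sub>n)\<parallel>\<close> per unit length. Moreover
\<open>f(\<theta>\<^sub>n) \<le> g\<^sub>n(\<theta>\<^sub>n) \<le> g\<^sub>n(\<theta>\<^sub>n\<^sub>-\<^sub>1) = f(\<theta>\<^sub>n\<^sub>-\<^sub>1)\<close>, so \<open>f(\<theta>\<^sub>n)\<close> decreases and, being bounded below,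
its decrements tend to zero. These decrements control \<open>\<parallel>\<nabla>h\<^sub>n(\<theta>\<^sub>n)\<parallel>\<^sup>2\<close>: for majorants through
the descent lemma applied to \<open>h\<^sub>n \<ge> 0\<close>, for \<open>\<rho>\<close>-strongly convex surrogates through the
quadratic growth \<open>\<rho>/2 \<parallel>\<theta>\<^sub>n - \<theta>\<^sub>n\<^sub>-\<^sub>1\<parallel>\<^sup>2 \<le> g\<^sub>n(\<theta>\<^sub>n\<^sub>-\<^sub>1) - g\<^sub>n(\<theta>\<^sub>n)\<close> together with
\<open>\<nabla>h\<^sub>n(\<theta>\<^sub>n\<^sub>-\<^sub>1) = 0\<close> and the Lipschitz bound on \<open>\<nabla>h\<^sub>n\<close>.
\<close>

lemma has_derivative_imp_directional_tendsto:
  fixes h :: "'a::real_inner \<Rightarrow> real"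
  assumes "(h has_derivative (\<lambda>v. a \<bullet> v)) (at x)"
  shows "((\<lambda>t. (h (x + t *\<^sub>R d) - h x) / t) \<longlongrightarrow> a \<bullet> d) (at_right 0)"
proof -
  have line: "((\<lambda>t. x + t *\<^sub>R d) has_derivative (\<lambda>s. s *\<^sub>R d)) (at 0)"
    by (auto intro!: derivative_eq_intros)
  have "(h has_derivative (\<lambda>v. a \<bullet> v)) (at (x + 0 *\<^sub>R d))"
    using assms by simp
  from has_derivative_compose[OF line this]
  have "((\<lambda>t. h (x + t *\<^sub>R d)) has_real_derivative a \<bullet> d) (at 0)"
    by (simp add: has_field_derivative_def mult_commute_abs)
  hence "((\<lambda>t. (h (x + t *\<^sub>R d) - h x) / t) \<longlongrightarrow> a \<bullet> d) (at 0)"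
    by (simp add: DERIV_def)
  thus ?thesis
    by (rule tendsto_mono[rotated]) (simp add: at_within_le_at)
qed

lemma lipschitz_gradient_descent:
  fixes h :: "'a::real_inner \<Rightarrow> real"
  assumes der: "\<And>z. (h has_derivative (\<lambda>v. G z \<bullet> v)) (at z)"
    and lip: "\<And>x y. norm (G x - G y) \<le> L * norm (x - y)"
  shows "h (x + d) \<le> h x + G x \<bullet> d + L / 2 * (norm d)\<^sup>2"
proof -
  define \<psi> where "\<psi> t = h (x + t *\<^sub>R d) - t * (G x \<bullet> d) - L / 2 * t\<^sup>2 * (norm d)\<^sup>2" for t
  define \<psi>' where "\<psi>' t = G (x + t *\<^sub>R d) \<bullet> d - G x \<bullet> d - L * t * (norm d)\<^sup>2" for t
  have "DERIV \<psi> t :> \<psi>' t" for t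
  proof -
    have line: "((\<lambda>t. x + t *\<^sub>R d) has_derivative (\<lambda>s. s *\<^sub>R d)) (at t)"
      by (auto intro!: derivative_eq_intros)
    from has_derivative_compose[OF line der]
    have "((\<lambda>t. h (x + t *\<^sub>R d)) has_real_derivative G (x + t *\<^sub>R d) \<bullet> d) (at t)"
      by (simp add: has_field_derivative_def mult_commute_abs)
    then show ?thesis
      unfolding \<psi>_def \<psi>'_def by (auto intro!: derivative_eq_intros)
  qed
  then obtain z where z: "0 < z" "z < 1" "\<psi> 1 - \<psi> 0 = \<psi>' z"
    using MVT2[of 0 1 \<psi> \<psi>'] by auto
  have "(G (x + z *\<^sub>R d) - G x) \<bullet> d \<le> norm (G (x + z *\<^sub>R d) - G x) * norm d"
    by (rule norm_cauchy_schwarz)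
  also have "\<dots> \<le> L * norm (z *\<^sub>R d) * norm d"
    using lip[of "x + z *\<^sub>R d" x] by (simp add: mult_right_mono)
  also have "\<dots> = L * z * (norm d)\<^sup>2"
    using z by (simp add: power2_eq_square)
  finally have "\<psi>' z \<le> 0"
    unfolding \<psi>'_def by (simp add: inner_diff_left)
  with z have "\<psi> 1 \<le> \<psi> 0" by simp
  thus ?thesis unfolding \<psi>_def by simp
qed

text \<open>The gradient step \<open>x - t G x\<close> with \<open>t = 1 / (\<bar>L\<bar> + 1)\<close> cannot push \<open>h\<close> below zero.\<close>

lemma nonneg_lipschitz_gradient_bound:
  fixes h :: "'a::real_inner \<Rightarrow> real"
  assumes der: "\<And>z. (h has_derivative (\<lambda>v. G z \<bullet> v)) (at z)"
    and lip: "\<And>x y. norm (G x - G y) \<le> L * norm (x - y)"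
    and nonneg: "\<And>z. 0 \<le> h z"
  shows "(norm (G x))\<^sup>2 \<le> 2 * (\<bar>L\<bar> + 1) * h x"
proof -
  define t where "t = 1 / (\<bar>L\<bar> + 1)"
  define N where "N = (norm (G x))\<^sup>2"
  have t: "0 < t" "L * t \<le> 1"
    by (auto simp: t_def field_simps)
  have N: "0 \<le> N" "G x \<bullet> G x = N"
    by (auto simp: N_def power2_norm_eq_inner)
  have "0 \<le> h (x + (- t *\<^sub>R G x))" by (rule nonneg)
  also have "\<dots> \<le> h x + G x \<bullet> (- t *\<^sub>R G x) + L / 2 * (norm (- t *\<^sub>R G x))\<^sup>2"
    by (rule lipschitz_gradient_descent[OF der lip])
  also have "\<dots> = h x - t * N + (L * t) * (t * N) / 2"
    using t by (simp add: N N_def power_mult_distrib power2_eq_square)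
  also have "\<dots> \<le> h x - t * N + 1 * (t * N) / 2"
    using t N by (intro add_left_mono divide_right_mono mult_right_mono) auto
  finally have "N \<le> 2 * h x / t"
    using t by (simp add: field_simps)
  thus ?thesis by (simp add: N_def t_def algebra_simps)
qed

lemma strongly_convex_combination:
  fixes g :: "'a::real_inner \<Rightarrow> real"
  assumes "strongly_convex rho g" "0 \<le> t" "t \<le> 1"
  shows "g ((1 - t) *\<^sub>R x + t *\<^sub>R y)
    \<le> (1 - t) * g x + t * g y - rho / 2 * t * (1 - t) * (norm (y - x))\<^sup>2"
proof -
  have convex: "g ((1 - t) *\<^sub>R x + t *\<^sub>R y) - rho / 2 * (norm ((1 - t) *\<^sub>R x + t *\<^sub>R y))\<^sup>2
      \<le> (1 - t) * (g x - rho / 2 * (norm x)\<^sup>2) + t * (g y - rho / 2 * (norm y)\<^sup>2)"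
    using assms unfolding strongly_convex_def by (intro convex_onD[of UNIV, simplified]) auto
  have norm_combination: "(norm ((1 - t) *\<^sub>R x + t *\<^sub>R y))\<^sup>2
      = (1 - t) * (norm x)\<^sup>2 + t * (norm y)\<^sup>2 - t * (1 - t) * (norm (y - x))\<^sup>2"
    unfolding power2_norm_eq_inner
    by (simp add: inner_diff_left inner_diff_right inner_add_left inner_add_right
        algebra_simps inner_commute)
  show ?thesis
    using convex unfolding norm_combination by (simp add: field_simps)
qed

lemma strongly_convex_argmin_growth:
  fixes g :: "'a::real_inner \<Rightarrow> real"
  assumes sc: "strongly_convex rho g" and "convex Theta"
    and x: "x \<in> argmin_on Theta g" and y: "y \<in> Theta"
  shows "g x + rho / 2 * (norm (y - x))\<^sup>2 \<le> g y"
proof -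
  have "s * (rho / 2 * (norm (y - x))\<^sup>2) \<le> g y - g x" if s: "0 < s" "s < 1" for s
  proof -
    define t where "t = 1 - s"
    have t: "0 < t" "t \<le> 1" using s by (auto simp: t_def)
    have "(1 - t) *\<^sub>R x + t *\<^sub>R y \<in> Theta"
      using \<open>convex Theta\<close> x y t by (intro convexD) (auto simp: argmin_on_def)
    hence "g x \<le> g ((1 - t) *\<^sub>R x + t *\<^sub>R y)"
      using x by (auto simp: argmin_on_def)
    also have "\<dots> \<le> (1 - t) * g x + t * g y - rho / 2 * t * (1 - t) * (norm (y - x))\<^sup>2"
      using strongly_convex_combination[OF sc] t by auto
    finally have "t * ((1 - t) * (rho / 2 * (norm (y - x))\<^sup>2)) \<le> t * (g y - g x)"
      by (simp add: algebra_simps)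
    thus ?thesis using t by (simp add: t_def)
  qed
  then have "rho / 2 * (norm (y - x))\<^sup>2 \<le> g y - g x"
    by (rule field_le_mult_one_interval)
  thus ?thesis by simp
qed

lemma argmin_dir_deriv_lower_bound:
  fixes Theta :: "'a::real_inner set"
  assumes "convex Theta" and min: "\<theta> \<in> argmin_on Theta g" and x: "x \<in> Theta"
    and exists: "dir_deriv_exists f \<theta> (x - \<theta>)"
    and der: "((\<lambda>y. g y - f y) has_derivative (\<lambda>v. a \<bullet> v)) (at \<theta>)"
  shows "- norm a * norm (x - \<theta>) \<le> dir_deriv f \<theta> (x - \<theta>)"
proof -
  define d where "d = x - \<theta>"
  obtain l where lim_f: "((\<lambda>t. (f (\<theta> + t *\<^sub>R d) - f \<theta>) / t) \<longlongrightarrow> l) (at_right 0)"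
    using exists unfolding dir_deriv_exists_def d_def by blast
  have deriv_f: "dir_deriv f \<theta> d = l"
    unfolding dir_deriv_def using lim_f by (intro tendsto_Lim) auto
  have "((\<lambda>t. (f (\<theta> + t *\<^sub>R d) - f \<theta>) / t
      + ((g (\<theta> + t *\<^sub>R d) - f (\<theta> + t *\<^sub>R d)) - (g \<theta> - f \<theta>)) / t) \<longlongrightarrow> l + a \<bullet> d) (at_right 0)"
    using lim_f has_derivative_imp_directional_tendsto[OF der] by (rule tendsto_add)
  then have lim_g: "((\<lambda>t. (g (\<theta> + t *\<^sub>R d) - g \<theta>) / t) \<longlongrightarrow> l + a \<bullet> d) (at_right 0)"
    by (simp add: diff_divide_distrib)
  have "\<forall>\<^sub>F t in at_right 0. 0 \<le> (g (\<theta> + t *\<^sub>R d) - g \<theta>) / t"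
    unfolding eventually_at_right_field
  proof (intro exI[of _ 1] conjI allI impI)
    fix t :: real
    assume t: "0 < t" "t < 1"
    have "\<theta> + t *\<^sub>R d = (1 - t) *\<^sub>R \<theta> + t *\<^sub>R x"
      by (simp add: d_def algebra_simps)
    also have "\<dots> \<in> Theta"
      using \<open>convex Theta\<close> min x t by (intro convexD) (auto simp: argmin_on_def)
    finally have "g \<theta> \<le> g (\<theta> + t *\<^sub>R d)"
      using min by (auto simp: argmin_on_def)
    then show "0 \<le> (g (\<theta> + t *\<^sub>R d) - g \<theta>) / t"
      using t by simp
  qed simp
  then have "0 \<le> l + a \<bullet> d"
    by (rule tendsto_lowerbound[OF lim_g]) simp
  moreover have "a \<bullet> d \<le> norm a * norm d"
    by (rule norm_cauchy_schwarz)
  ultimately show ?thesis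
    using deriv_f by (simp add: d_def)
qed

text \<open>The constant covers both kinds of surrogate at once; for majorants \<open>rho\<close> is an arbitrary positive number.\<close>

lemma first_order_surrogate_step:
  fixes Theta :: "'a::euclidean_space set"
  assumes "convex Theta" and surrogate: "first_order_surrogate Theta L f \<kappa> g"
    and "\<kappa> \<in> Theta" and min: "\<theta> \<in> argmin_on Theta g"
    and exists: "\<forall>x \<in> Theta. dir_deriv_exists f \<theta> (x - \<theta>)"
    and regular: "majorant f g \<or> strongly_convex rho g" and "0 < rho"
  shows "f \<theta> \<le> f \<kappa>"
    and "\<exists>e \<ge> 0. e\<^sup>2 \<le> (2 * (\<bar>L\<bar> + 1) + 2 * L\<^sup>2 / rho) * (f \<kappa> - f \<theta>) \<and>
           ereal (- e) \<le> (INF x \<in> Theta - {\<theta>}. ereal (dir_deriv f \<theta> (x - \<theta>) / norm (x - \<theta>)))"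
proof -
  obtain G where der: "\<And>x. ((\<lambda>y. g y - f y) has_derivative (\<lambda>v. G x \<bullet> v)) (at x)"
    and lip: "\<And>x y. norm (G x - G y) \<le> L * norm (x - y)"
    and tangent: "g \<kappa> = f \<kappa>" "G \<kappa> = 0"
    using surrogate unfolding first_order_surrogate_def by auto
  have above: "f \<theta> \<le> g \<theta>"
    using surrogate min unfolding first_order_surrogate_def by blast
  have "g \<theta> \<le> g \<kappa>"
    using min \<open>\<kappa> \<in> Theta\<close> by (auto simp: argmin_on_def)
  then show decrease: "f \<theta> \<le> f \<kappa>"
    using above tangent by linarith
  have "(norm (G \<theta>))\<^sup>2 \<le> (2 * (\<bar>L\<bar> + 1) + 2 * L\<^sup>2 / rho) * (f \<kappa> - f \<theta>)"
    using regular
  proof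
    assume "majorant f g"
    then have "(norm (G \<theta>))\<^sup>2 \<le> 2 * (\<bar>L\<bar> + 1) * (g \<theta> - f \<theta>)"
      by (intro nonneg_lipschitz_gradient_bound[OF der lip]) (simp add: majorant_def)
    also have "\<dots> \<le> 2 * (\<bar>L\<bar> + 1) * (f \<kappa> - f \<theta>)"
      using \<open>g \<theta> \<le> g \<kappa>\<close> tangent by (intro mult_left_mono) auto
    also have "\<dots> \<le> (2 * (\<bar>L\<bar> + 1) + 2 * L\<^sup>2 / rho) * (f \<kappa> - f \<theta>)"
      using decrease \<open>0 < rho\<close> by (intro mult_right_mono) auto
    finally show ?thesis .
  next
    assume "strongly_convex rho g"
    from strongly_convex_argmin_growth[OF this \<open>convex Theta\<close> min \<open>\<kappa> \<in> Theta\<close>]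
    have "rho / 2 * (norm (\<kappa> - \<theta>))\<^sup>2 \<le> f \<kappa> - f \<theta>"
      using above tangent by linarith
    then have growth: "(norm (\<kappa> - \<theta>))\<^sup>2 \<le> 2 / rho * (f \<kappa> - f \<theta>)"
      using \<open>0 < rho\<close> by (simp add: field_simps)
    have "norm (G \<theta>) \<le> L * norm (\<kappa> - \<theta>)"
      using lip[of \<theta> \<kappa>] tangent by (simp add: norm_minus_commute)
    then have "(norm (G \<theta>))\<^sup>2 \<le> L\<^sup>2 * (norm (\<kappa> - \<theta>))\<^sup>2"
      by (metis norm_ge_zero power_mono power_mult_distrib)
    also have "\<dots> \<le> L\<^sup>2 * (2 / rho * (f \<kappa> - f \<theta>))"
      using growth by (intro mult_left_mono) auto
    also have "\<dots> \<le> (2 * (\<bar>L\<bar> + 1) + 2 * L\<^sup>2 / rho) * (f \<kappa> - f \<theta>)"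
    proof -
      have "0 \<le> 2 * (\<bar>L\<bar> + 1) * (f \<kappa> - f \<theta>)"
        using decrease by simp
      moreover have "L\<^sup>2 * (2 / rho * (f \<kappa> - f \<theta>)) = 2 * L\<^sup>2 / rho * (f \<kappa> - f \<theta>)"
        by simp
      ultimately show ?thesis
        by (simp only: distrib_right)
    qed
    finally show ?thesis .
  qed
  moreover have "ereal (- norm (G \<theta>))
      \<le> (INF x \<in> Theta - {\<theta>}. ereal (dir_deriv f \<theta> (x - \<theta>) / norm (x - \<theta>)))"
  proof (rule INF_greatest)
    fix x
    assume x: "x \<in> Theta - {\<theta>}"
    have "- norm (G \<theta>) * norm (x - \<theta>) \<le> dir_deriv f \<theta> (x - \<theta>)"
      by (rule argmin_dir_deriv_lower_bound[OF \<open>convex Theta\<close> min _ _ der]) (use x exists in auto)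
    moreover have "0 < norm (x - \<theta>)"
      using x by simp
    ultimately show "ereal (- norm (G \<theta>)) \<le> ereal (dir_deriv f \<theta> (x - \<theta>) / norm (x - \<theta>))"
      by (simp add: pos_le_divide_eq)
  qed
  ultimately show "\<exists>e \<ge> 0. e\<^sup>2 \<le> (2 * (\<bar>L\<bar> + 1) + 2 * L\<^sup>2 / rho) * (f \<kappa> - f \<theta>) \<and>
      ereal (- e) \<le> (INF x \<in> Theta - {\<theta>}. ereal (dir_deriv f \<theta> (x - \<theta>) / norm (x - \<theta>)))"
    using norm_ge_zero by blast
qed

lemma decrement_bound_tendsto_zero:
  fixes u e :: "nat \<Rightarrow> real"
  assumes "bdd_below (range u)" and "\<And>n. u (Suc n) \<le> u n" and "0 \<le> C"
    and nonneg: "\<And>n. 0 \<le> e n"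
    and bound: "\<And>n. (e n)\<^sup>2 \<le> C * (u n - u (Suc n))"
  shows "e \<longlonglongrightarrow> 0"
proof -
  obtain B where "\<forall>n. B \<le> u n"
    using assms(1) by (auto simp: bdd_below_def)
  moreover have "decseq u"
    using assms(2) by (simp add: decseq_SucI)
  ultimately obtain l where "u \<longlonglongrightarrow> l"
    using decseq_convergent by blast
  then have "(\<lambda>n. sqrt (C * (u n - u (Suc n)))) \<longlonglongrightarrow> sqrt (C * (l - l))"
    by (intro tendsto_intros LIMSEQ_Suc)
  then have upper: "(\<lambda>n. sqrt (C * (u n - u (Suc n)))) \<longlonglongrightarrow> 0"
    by simp
  have "e n \<le> sqrt (C * (u n - u (Suc n)))" for n
    using bound[of n] nonneg[of n] by (simp add: real_le_rsqrt)
  then show ?thesis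
    using nonneg by (intro tendsto_sandwich[OF _ _ tendsto_const upper]) (auto intro: always_eventually)
qed

lemma liminf_nonneg_of_vanishing_lower_bound:
  fixes a :: "nat \<Rightarrow> ereal" and e :: "nat \<Rightarrow> real"
  assumes "e \<longlonglongrightarrow> 0" and "\<And>n. ereal (- e n) \<le> a (Suc n)"
  shows "0 \<le> liminf a"
proof -
  have "liminf (\<lambda>n. ereal (- e n)) = 0"
    using assms(1) by (intro lim_imp_Liminf) (auto intro!: tendsto_eq_intros)
  moreover have "liminf (\<lambda>n. ereal (- e n)) \<le> liminf (\<lambda>n. a (n + 1))"
    using assms(2) by (intro Liminf_mono always_eventually) simp
  ultimately show ?thesis
    using liminf_shift[of a] by simp
qed

theorem proposition2p1:
  fixes Theta :: "(real ^ 'p) set"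
    and f :: "real ^ 'p \<Rightarrow> real"
    and g :: "nat \<Rightarrow> real ^ 'p \<Rightarrow> real"
    and theta :: "nat \<Rightarrow> real ^ 'p"
    and L :: real
  assumes "convex Theta"
    and "continuous_on UNIV f"
    and "bdd_below (range f)"
    and "\<forall>x \<in> Theta. \<forall>y \<in> Theta. dir_deriv_exists f x (y - x)"
    and "theta 0 \<in> Theta"
    and "\<forall>n \<ge> 1. theta n \<in> argmin_on Theta (g n)"
    and "\<forall>n \<ge> 1. first_order_surrogate Theta L f (theta (n - 1)) (g n)"
    and "(\<forall>n \<ge> 1. majorant f (g n)) \<or> (\<exists>rho > 0. \<forall>n \<ge> 1. strongly_convex rho (g n))"
  shows "(\<forall>n. f (theta (Suc n)) \<le> f (theta n)) \<and>
         liminf (\<lambda>n. INF x \<in> Theta - {theta n}.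
            ereal (dir_deriv f (theta n) (x - theta n) / norm (x - theta n))) \<ge> 0"
proof -
  let ?slope = "\<lambda>n. INF x \<in> Theta - {theta n}.
    ereal (dir_deriv f (theta n) (x - theta n) / norm (x - theta n))"
  obtain rho where "0 < rho"
    and regular: "\<And>n. 1 \<le> n \<Longrightarrow> majorant f (g n) \<or> strongly_convex rho (g n)"
    using assms(8) zero_less_one by blast
  define C where "C = 2 * (\<bar>L\<bar> + 1) + 2 * L\<^sup>2 / rho"
  have in_Theta: "theta n \<in> Theta" for n
    using assms(5,6) by (cases n) (auto simp: argmin_on_def)
  have step: "f (theta (Suc n)) \<le> f (theta n) \<and> (\<exists>e \<ge> 0.
      e\<^sup>2 \<le> C * (f (theta n) - f (theta (Suc n))) \<and> ereal (- e) \<le> ?slope (Suc n))" for n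
  proof -
    have "first_order_surrogate Theta L f (theta n) (g (Suc n))"
      using assms(7) by (metis diff_Suc_1 le_add1 plus_1_eq_Suc)
    moreover have "theta (Suc n) \<in> argmin_on Theta (g (Suc n))"
      using assms(6) by simp
    moreover have "\<forall>x \<in> Theta. dir_deriv_exists f (theta (Suc n)) (x - theta (Suc n))"
      using assms(4) in_Theta by blast
    ultimately show ?thesis
      using first_order_surrogate_step[OF assms(1) _ in_Theta _ _ regular[of "Suc n", simplified] \<open>0 < rho\<close>]
      unfolding C_def by blast
  qed
  then have "\<forall>n. \<exists>e. 0 \<le> e \<and> e\<^sup>2 \<le> C * (f (theta n) - f (theta (Suc n))) \<and>
      ereal (- e) \<le> ?slope (Suc n)"
    by blast
  then obtain E where E: "\<forall>n. 0 \<le> E n \<and> (E n)\<^sup>2 \<le> C * (f (theta n) - f (theta (Suc n))) \<and>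
      ereal (- E n) \<le> ?slope (Suc n)"
    by (rule choice[THEN exE])
  have decrease: "f (theta (Suc n)) \<le> f (theta n)" for n
    using step by blast
  have "E \<longlonglongrightarrow> 0"
  proof (rule decrement_bound_tendsto_zero)
    show "bdd_below (range (\<lambda>n. f (theta n)))"
      using assms(3) by (auto simp: bdd_below_def)
    show "0 \<le> C"
      using \<open>0 < rho\<close> by (simp add: C_def)
  qed (use E decrease in auto)
  then have "0 \<le> liminf ?slope"
    by (rule liminf_nonneg_of_vanishing_lower_bound) (use E in blast)
  with decrease show ?thesis
    by blast
qed

end
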